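(* Let $R$ be a ring with identity and an involution $*$, and let $a,b,c\in R$. Then: (i) $a$ is left $(b,c)$-invertible if and only if $a^*$ is right $(c^*,b^* )$-invertible; (ii) if $b$ and $c$ are regular, then $a$ is left annihilator $(b,c)$-invertible if and only if $a^*$ is right annihilator $(c^*,b^* )$-invertible.
   Context: An involution is a map $*:R\to R$ with $(x^* )^*=x$, $(xy)^*=y^*x^*$, $(x+y)^*=x^*+y^*$. An element $x$ is regular if $x=xzx$ for some $z\in R$. For $x\in R$: $xR=\{xr:r\in R\}$, $Rx=\{rx:r\in R\}$, $x^\circ=\{r: xr=0\}$, ${}^\circ x=\{r: rx=0\}$. An element $a$ is left $(b,c)$-invertible if there is $y$ with $Ry\subseteq Rc$ and $yab=b$; right $(b,c)$-invertible if there is $y$ with $yR\subseteq bR$ and $cay=c$; right annihilator $(b,c)$-invertible if there is $y$ with $c^\circ\subseteq y^\circ$ and $yab=b$; left annihilator $(b,c)$-invertible if there is $y$ with ${}^\circ b\subseteq {}^\circ y$ and $cay=c$. *)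

theory Defs
  imports Main
begin

definition involution :: "('a::ring_1 \<Rightarrow> 'a) \<Rightarrow> bool" where
  "involution s \<longleftrightarrow> (\<forall>x. s (s x) = x) \<and> (\<forall>x y. s (x * y) = s y * s x)
     \<and> (\<forall>x y. s (x + y) = s x + s y)"

definition regular :: "'a::ring_1 \<Rightarrow> bool" where
  "regular x \<longleftrightarrow> (\<exists>z. x = x * z * x)"

definition rideal :: "'a::ring_1 \<Rightarrow> 'a set" where
  "rideal x = {x * r | r. True}"

definition lideal :: "'a::ring_1 \<Rightarrow> 'a set" where
  "lideal x = {r * x | r. True}"

definition rann :: "'a::ring_1 \<Rightarrow> 'a set" where
  "rann x = {r. x * r = 0}"

definition lann :: "'a::ring_1 \<Rightarrow> 'a set" where
  "lann x = {r. r * x = 0}"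

definition left_bc_inv :: "'a::ring_1 \<Rightarrow> 'a \<Rightarrow> 'a \<Rightarrow> bool" where
  "left_bc_inv a b c \<longleftrightarrow> (\<exists>y. lideal y \<subseteq> lideal c \<and> y * a * b = b)"

definition right_bc_inv :: "'a::ring_1 \<Rightarrow> 'a \<Rightarrow> 'a \<Rightarrow> bool" where
  "right_bc_inv a b c \<longleftrightarrow> (\<exists>y. rideal y \<subseteq> rideal b \<and> c * a * y = c)"

definition right_ann_bc_inv :: "'a::ring_1 \<Rightarrow> 'a \<Rightarrow> 'a \<Rightarrow> bool" where
  "right_ann_bc_inv a b c \<longleftrightarrow> (\<exists>y. rann c \<subseteq> rann y \<and> y * a * b = b)"

definition left_ann_bc_inv :: "'a::ring_1 \<Rightarrow> 'a \<Rightarrow> 'a \<Rightarrow> bool" where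
  "left_ann_bc_inv a b c \<longleftrightarrow> (\<exists>y. lann b \<subseteq> lann y \<and> c * a * y = c)"

end

theory Submission
  imports Defs
begin

text \<open>An involution is a bijective anti-automorphism, so it exchanges left and right ideals and
  left and right annihilators, and it reverses products: \<open>y * a * b = b\<close> becomes
  \<open>s b * s a * s y = s b\<close>. Hence \<open>y\<close> witnesses a left-handed \<open>(b,c)\<close>-inverse of \<open>a\<close> exactly
  when \<open>s y\<close> witnesses the corresponding right-handed \<open>(s c, s b)\<close>-inverse of \<open>s a\<close>.\<close>

lemma lideal_subset_iff: "lideal y \<subseteq> lideal c \<longleftrightarrow> (\<exists>r. y = r * (c::'a::ring_1))"
proof
  assume "lideal y \<subseteq> lideal c"
  moreover have "y \<in> lideal y"
    unfolding lideal_def by (metis (mono_tags) mult_1 mem_Collect_eq)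
  ultimately show "\<exists>r. y = r * c"
    unfolding lideal_def by blast
next
  assume "\<exists>r. y = r * c"
  then show "lideal y \<subseteq> lideal c"
    unfolding lideal_def by (auto simp flip: mult.assoc)
qed

lemma rideal_subset_iff: "rideal y \<subseteq> rideal b \<longleftrightarrow> (\<exists>r. y = (b::'a::ring_1) * r)"
proof
  assume "rideal y \<subseteq> rideal b"
  moreover have "y \<in> rideal y"
    unfolding rideal_def by (metis (mono_tags) mult_1_right mem_Collect_eq)
  ultimately show "\<exists>r. y = b * r"
    unfolding rideal_def by blast
next
  assume "\<exists>r. y = b * r"
  then show "rideal y \<subseteq> rideal b"
    unfolding rideal_def by (auto simp: mult.assoc)
qed

context
  fixes s :: "'a::ring_1 \<Rightarrow> 'a"
  assumes inv: "involution s"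
begin

lemma involution_involutive [simp]: "s (s x) = x"
  using inv unfolding involution_def by blast

lemma involution_mult [simp]: "s (x * y) = s y * s x"
  using inv unfolding involution_def by blast

lemma involution_zero [simp]: "s 0 = 0"
proof -
  have "s (0 + 0) = s 0 + s 0"
    using inv unfolding involution_def by blast
  then show ?thesis by simp
qed

lemma involution_eq_iff: "s x = s y \<longleftrightarrow> x = y"
  by (metis involution_involutive)

lemma involution_ex_iff: "(\<exists>y. P (s y)) \<longleftrightarrow> (\<exists>y. P y)"
  by (metis involution_involutive)

lemma involution_all_iff: "(\<forall>y. P (s y)) \<longleftrightarrow> (\<forall>y. P y)"
  by (metis involution_involutive)

lemma involution_mult_eq_zero_iff: "s y * s x = 0 \<longleftrightarrow> x * y = 0"
  by (metis involution_mult involution_zero involution_eq_iff)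

lemma involution_triple_eq_iff: "s x * s a * s y = s z \<longleftrightarrow> y * a * x = z"
  by (metis involution_eq_iff involution_mult mult.assoc)

lemma lideal_subset_iff_rideal_involution:
  "lideal y \<subseteq> lideal c \<longleftrightarrow> rideal (s y) \<subseteq> rideal (s c)"
proof -
  have "lideal y \<subseteq> lideal c \<longleftrightarrow> (\<exists>r. y = r * c)"
    by (rule lideal_subset_iff)
  also have "\<dots> \<longleftrightarrow> (\<exists>r. s y = s c * s r)"
    by (metis involution_eq_iff involution_mult)
  also have "\<dots> \<longleftrightarrow> (\<exists>r. s y = s c * r)"
    by (rule involution_ex_iff)
  also have "\<dots> \<longleftrightarrow> rideal (s y) \<subseteq> rideal (s c)"
    by (rule rideal_subset_iff[symmetric])
  finally show ?thesis .
qed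

lemma lann_subset_iff_rann_involution:
  "lann b \<subseteq> lann y \<longleftrightarrow> rann (s b) \<subseteq> rann (s y)"
proof -
  have "lann b \<subseteq> lann y \<longleftrightarrow> (\<forall>r. s b * s r = 0 \<longrightarrow> s y * s r = 0)"
    unfolding lann_def by (auto simp: involution_mult_eq_zero_iff)
  also have "\<dots> \<longleftrightarrow> (\<forall>r. s b * r = 0 \<longrightarrow> s y * r = 0)"
    by (rule involution_all_iff)
  also have "\<dots> \<longleftrightarrow> rann (s b) \<subseteq> rann (s y)"
    unfolding rann_def by auto
  finally show ?thesis .
qed

lemma left_bc_inv_iff_right_bc_inv_involution:
  "left_bc_inv a b c \<longleftrightarrow> right_bc_inv (s a) (s c) (s b)"
proof -
  have "left_bc_inv a b c
      \<longleftrightarrow> (\<exists>y. rideal (s y) \<subseteq> rideal (s c) \<and> s b * s a * s y = s b)"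
    unfolding left_bc_inv_def lideal_subset_iff_rideal_involution involution_triple_eq_iff ..
  also have "\<dots> \<longleftrightarrow> right_bc_inv (s a) (s c) (s b)"
    unfolding right_bc_inv_def by (rule involution_ex_iff)
  finally show ?thesis .
qed

lemma left_ann_bc_inv_iff_right_ann_bc_inv_involution:
  "left_ann_bc_inv a b c \<longleftrightarrow> right_ann_bc_inv (s a) (s c) (s b)"
proof -
  have "left_ann_bc_inv a b c
      \<longleftrightarrow> (\<exists>y. rann (s b) \<subseteq> rann (s y) \<and> s y * s a * s c = s c)"
    unfolding left_ann_bc_inv_def lann_subset_iff_rann_involution involution_triple_eq_iff ..
  also have "\<dots> \<longleftrightarrow> right_ann_bc_inv (s a) (s c) (s b)"
    unfolding right_ann_bc_inv_def by (rule involution_ex_iff)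
  finally show ?thesis .
qed

end

theorem proposition2p8:
  fixes s :: "'a::ring_1 \<Rightarrow> 'a" and a b c :: 'a
  assumes "involution s"
  shows "(left_bc_inv a b c \<longleftrightarrow> right_bc_inv (s a) (s c) (s b))
    \<and> (regular b \<and> regular c \<longrightarrow>
         (left_ann_bc_inv a b c \<longleftrightarrow> right_ann_bc_inv (s a) (s c) (s b)))"
  using left_bc_inv_iff_right_bc_inv_involution[OF assms]
    left_ann_bc_inv_iff_right_ann_bc_inv_involution[OF assms]
  by blast

end
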